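(* Let $X=\{u_1x=v_1y,\ u_2z=v_2t,\ w^2+(x+z)(y+t)=0\}\subset\mathbb{P}^1\times\mathbb{P}^1\times\mathbb{P}^4$ and let $\mathbf{G}\subset\mathrm{Aut}(X)$ be the subgroup generated by $\Gamma$ and $\tau_1,\tau_2,\tau_3$. Then (1) $X$ has no $\mathbf{G}$-fixed points; (2) the only $\mathbf{G}$-invariant irreducible curves in $X$ are $C$ and $C'$.
   Context: Coordinates are $([u_1:v_1],[u_2:v_2],[x:y:z:t:w])$. $\tau_1\colon([u_1:v_1],[u_2:v_2],[x:y:z:t:w])\mapsto([v_1:u_1],[v_2:u_2],[y:x:t:z:w])$, $\tau_2\colon\mapsto([u_2:v_2],[u_1:v_1],[z:t:x:y:w])$, $\tau_3\colon\mapsto([u_1:v_1],[u_2:v_2],[x:y:z:t:-w])$. $\Gamma\cong\mathbb{C}^\ast$ consists of the automorphisms $([u_1:v_1],[u_2:v_2],[x:y:z:t:w])\mapsto([u_1/\lambda:\lambda v_1],[u_2/\lambda:\lambda v_2],[\lambda x:y/\lambda:\lambda z:t/\lambda:w])$, $\lambda\in\mathbb{C}^\ast$. $C=\{w=0,\ x+z=0,\ y+t=0,\ u_1z=v_1t,\ u_2z=v_2t,\ v_1u_2=u_1v_2\}$ is the singular curve of $X$, and $C'=X\cap\{x=z,\ t=y\}$. *)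

theory Defs
  imports Main "HOL.Complex"
begin

text \<open>A point of P1 x P1 x P4 is represented by a representative
  ((u1,v1),(u2,v2),(x,y,z,t,w)); a point is the class of all its representatives
  modulo independent rescaling of the three factors.\<close>

type_synonym rep = "(complex \<times> complex) \<times> (complex \<times> complex) \<times>
                    (complex \<times> complex \<times> complex \<times> complex \<times> complex)"

definition scl :: "complex \<Rightarrow> complex \<Rightarrow> complex \<Rightarrow> rep \<Rightarrow> rep" where
  "scl a b c r = (case r of ((u1,v1),(u2,v2),(x,y,z,t,w)) \<Rightarrow>
     ((a*u1, a*v1), (b*u2, b*v2), (c*x, c*y, c*z, c*t, c*w)))"

definition valid :: "rep \<Rightarrow> bool" where
  "valid r = (case r of ((u1,v1),(u2,v2),(x,y,z,t,w)) \<Rightarrow>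
     (u1,v1) \<noteq> (0,0) \<and> (u2,v2) \<noteq> (0,0) \<and> (x,y,z,t,w) \<noteq> (0,0,0,0,0))"

definition proj_eq :: "rep \<Rightarrow> rep \<Rightarrow> bool" where
  "proj_eq r s \<longleftrightarrow> (\<exists>a b c. a \<noteq> 0 \<and> b \<noteq> 0 \<and> c \<noteq> 0 \<and> s = scl a b c r)"

definition pt :: "rep \<Rightarrow> rep set" where
  "pt r = {s. proj_eq r s}"

definition PP :: "rep set set" where
  "PP = pt ` {r. valid r}"

inductive poly_fun :: "(rep \<Rightarrow> complex) \<Rightarrow> bool" where
  const: "poly_fun (\<lambda>_. c)"
| cu1: "poly_fun (\<lambda>((u1,v1),(u2,v2),(x,y,z,t,w)). u1)"
| cv1: "poly_fun (\<lambda>((u1,v1),(u2,v2),(x,y,z,t,w)). v1)"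
| cu2: "poly_fun (\<lambda>((u1,v1),(u2,v2),(x,y,z,t,w)). u2)"
| cv2: "poly_fun (\<lambda>((u1,v1),(u2,v2),(x,y,z,t,w)). v2)"
| cx: "poly_fun (\<lambda>((u1,v1),(u2,v2),(x,y,z,t,w)). x)"
| cy: "poly_fun (\<lambda>((u1,v1),(u2,v2),(x,y,z,t,w)). y)"
| cz: "poly_fun (\<lambda>((u1,v1),(u2,v2),(x,y,z,t,w)). z)"
| ct: "poly_fun (\<lambda>((u1,v1),(u2,v2),(x,y,z,t,w)). t)"
| cw: "poly_fun (\<lambda>((u1,v1),(u2,v2),(x,y,z,t,w)). w)"
| add: "poly_fun f \<Longrightarrow> poly_fun g \<Longrightarrow> poly_fun (\<lambda>r. f r + g r)"
| mult: "poly_fun f \<Longrightarrow> poly_fun g \<Longrightarrow> poly_fun (\<lambda>r. f r * g r)"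

definition mhom_poly :: "(rep \<Rightarrow> complex) \<Rightarrow> bool" where
  "mhom_poly f \<longleftrightarrow> poly_fun f \<and>
     (\<exists>d1 d2 d3::nat. \<forall>a b c r. f (scl a b c r) = a^d1 * b^d2 * c^d3 * f r)"

definition zclosed :: "rep set set \<Rightarrow> bool" where
  "zclosed S \<longleftrightarrow> (\<exists>F. (\<forall>f\<in>F. mhom_poly f) \<and>
      S = {P \<in> PP. \<forall>r\<in>P. \<forall>f\<in>F. f r = 0})"

definition zirreducible :: "rep set set \<Rightarrow> bool" where
  "zirreducible S \<longleftrightarrow> zclosed S \<and> S \<noteq> {} \<and>
     (\<forall>A B. zclosed A \<and> zclosed B \<and> S = A \<union> B \<longrightarrow> S = A \<or> S = B)"

text \<open>Irreducible curve: irreducible closed subset of (Krull) dimension exactly 1.\<close>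
definition irred_curve :: "rep set set \<Rightarrow> bool" where
  "irred_curve Z \<longleftrightarrow> zirreducible Z \<and>
     (\<exists>W. zirreducible W \<and> W \<subset> Z) \<and>
     \<not> (\<exists>W1 W2. zirreducible W1 \<and> zirreducible W2 \<and> W2 \<subset> W1 \<and> W1 \<subset> Z)"

definition zero_set :: "(rep \<Rightarrow> bool) \<Rightarrow> rep set set" where
  "zero_set E = {P \<in> PP. \<forall>r\<in>P. E r}"

definition XX :: "rep set set" where
  "XX = zero_set (\<lambda>((u1,v1),(u2,v2),(x,y,z,t,w)).
      u1*x = v1*y \<and> u2*z = v2*t \<and> w^2 + (x+z)*(y+t) = 0)"

definition CC :: "rep set set" where
  "CC = zero_set (\<lambda>((u1,v1),(u2,v2),(x,y,z,t,w)).
      w = 0 \<and> x + z = 0 \<and> y + t = 0 \<and> u1*z = v1*t \<and> u2*z = v2*t \<and> v1*u2 = u1*v2)"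

definition CC' :: "rep set set" where
  "CC' = XX \<inter> zero_set (\<lambda>((u1,v1),(u2,v2),(x,y,z,t,w)). x = z \<and> t = y)"

definition tau1 :: "rep \<Rightarrow> rep" where
  "tau1 r = (case r of ((u1,v1),(u2,v2),(x,y,z,t,w)) \<Rightarrow> ((v1,u1),(v2,u2),(y,x,t,z,w)))"
definition tau2 :: "rep \<Rightarrow> rep" where
  "tau2 r = (case r of ((u1,v1),(u2,v2),(x,y,z,t,w)) \<Rightarrow> ((u2,v2),(u1,v1),(z,t,x,y,w)))"
definition tau3 :: "rep \<Rightarrow> rep" where
  "tau3 r = (case r of ((u1,v1),(u2,v2),(x,y,z,t,w)) \<Rightarrow> ((u1,v1),(u2,v2),(x,y,z,t,-w)))"
definition gam :: "complex \<Rightarrow> rep \<Rightarrow> rep" where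
  "gam l r = (case r of ((u1,v1),(u2,v2),(x,y,z,t,w)) \<Rightarrow>
      ((u1/l, l*v1),(u2/l, l*v2),(l*x, y/l, l*z, t/l, w)))"

definition lift :: "(rep \<Rightarrow> rep) \<Rightarrow> rep set \<Rightarrow> rep set" where
  "lift f P = pt (f (SOME r. r \<in> P))"

inductive_set GG :: "(rep set \<Rightarrow> rep set) set" where
  gid: "id \<in> GG"
| gt1: "lift tau1 \<in> GG"
| gt2: "lift tau2 \<in> GG"
| gt3: "lift tau3 \<in> GG"
| ggam: "l \<noteq> 0 \<Longrightarrow> lift (gam l) \<in> GG"
| gcomp: "g \<in> GG \<Longrightarrow> h \<in> GG \<Longrightarrow> g \<circ> h \<in> GG"
| ginv: "g \<in> GG \<Longrightarrow> inv_into XX g \<in> GG"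

end

theory Submission
  imports Defs "HOL-Computational_Algebra.Polynomial"
begin

(* A point fixed by Gamma has u1 v1 = 0, since Gamma rescales the ratio v1/u1 by lambda^2,
   while a point fixed by tau1 has u1 v1 <> 0; so G has no fixed points.

   Let Z be a G-invariant irreducible curve. As tau1 swaps u1 and v1, irreducibility gives a
   point of Z with u1 v1 <> 0, and Gamma moves it to a point r0 of Z with u1 = v1 = 1. The
   Gamma-orbit of r0 is parametrised by polynomials, so its Zariski closure is irreducible; it
   has more than one point, hence it is all of Z. Along the orbit [u1:v1] and [u2:v2] are
   rescaled by the same factor and [x:z] is constant; evaluating these invariants at the points
   tau1 r0 and tau2 r0 of Z, together with the equations of X, puts r0 on C or on C'. Both curves
   are images of P^1, hence irreducible, and G-invariant, so the same argument identifies each of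
   them with the orbit closure of any of their points: Z = C or Z = C'. *)

section \<open>Coordinates and projective equivalence\<close>

definition cU1 :: "rep \<Rightarrow> complex" where "cU1 = (\<lambda>((u1,v1),(u2,v2),(x,y,z,t,w)). u1)"
definition cV1 :: "rep \<Rightarrow> complex" where "cV1 = (\<lambda>((u1,v1),(u2,v2),(x,y,z,t,w)). v1)"
definition cU2 :: "rep \<Rightarrow> complex" where "cU2 = (\<lambda>((u1,v1),(u2,v2),(x,y,z,t,w)). u2)"
definition cV2 :: "rep \<Rightarrow> complex" where "cV2 = (\<lambda>((u1,v1),(u2,v2),(x,y,z,t,w)). v2)"
definition cX :: "rep \<Rightarrow> complex" where "cX = (\<lambda>((u1,v1),(u2,v2),(x,y,z,t,w)). x)"
definition cY :: "rep \<Rightarrow> complex" where "cY = (\<lambda>((u1,v1),(u2,v2),(x,y,z,t,w)). y)"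
definition cZ :: "rep \<Rightarrow> complex" where "cZ = (\<lambda>((u1,v1),(u2,v2),(x,y,z,t,w)). z)"
definition cT :: "rep \<Rightarrow> complex" where "cT = (\<lambda>((u1,v1),(u2,v2),(x,y,z,t,w)). t)"
definition cW :: "rep \<Rightarrow> complex" where "cW = (\<lambda>((u1,v1),(u2,v2),(x,y,z,t,w)). w)"

lemmas coord_defs = cU1_def cV1_def cU2_def cV2_def cX_def cY_def cZ_def cT_def cW_def

lemma coords_Pair [simp]:
  "cU1 ((u1,v1),(u2,v2),(x,y,z,t,w)) = u1" "cV1 ((u1,v1),(u2,v2),(x,y,z,t,w)) = v1"
  "cU2 ((u1,v1),(u2,v2),(x,y,z,t,w)) = u2" "cV2 ((u1,v1),(u2,v2),(x,y,z,t,w)) = v2"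
  "cX ((u1,v1),(u2,v2),(x,y,z,t,w)) = x" "cY ((u1,v1),(u2,v2),(x,y,z,t,w)) = y"
  "cZ ((u1,v1),(u2,v2),(x,y,z,t,w)) = z" "cT ((u1,v1),(u2,v2),(x,y,z,t,w)) = t"
  "cW ((u1,v1),(u2,v2),(x,y,z,t,w)) = w"
  by (simp_all add: coord_defs)

lemma rep_eq_coords: "r = ((cU1 r, cV1 r), (cU2 r, cV2 r), (cX r, cY r, cZ r, cT r, cW r))"
  by (simp add: coord_defs split: prod.splits)

lemma rep_eqI:
  "cU1 r = cU1 s \<Longrightarrow> cV1 r = cV1 s \<Longrightarrow> cU2 r = cU2 s \<Longrightarrow> cV2 r = cV2 s \<Longrightarrow>
   cX r = cX s \<Longrightarrow> cY r = cY s \<Longrightarrow> cZ r = cZ s \<Longrightarrow> cT r = cT s \<Longrightarrow> cW r = cW s \<Longrightarrow> r = s"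
  by (metis rep_eq_coords)

lemma coords_scl [simp]:
  "cU1 (scl a b c r) = a * cU1 r" "cV1 (scl a b c r) = a * cV1 r"
  "cU2 (scl a b c r) = b * cU2 r" "cV2 (scl a b c r) = b * cV2 r"
  "cX (scl a b c r) = c * cX r" "cY (scl a b c r) = c * cY r" "cZ (scl a b c r) = c * cZ r"
  "cT (scl a b c r) = c * cT r" "cW (scl a b c r) = c * cW r"
  by (simp_all add: scl_def coord_defs split: prod.splits)

lemma valid_iff_coords:
  "valid r \<longleftrightarrow> (cU1 r \<noteq> 0 \<or> cV1 r \<noteq> 0) \<and> (cU2 r \<noteq> 0 \<or> cV2 r \<noteq> 0) \<and>
     (cX r \<noteq> 0 \<or> cY r \<noteq> 0 \<or> cZ r \<noteq> 0 \<or> cT r \<noteq> 0 \<or> cW r \<noteq> 0)"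
  by (subst rep_eq_coords) (simp add: valid_def)

lemma valid_scl [simp]: "a \<noteq> 0 \<Longrightarrow> b \<noteq> 0 \<Longrightarrow> c \<noteq> 0 \<Longrightarrow> valid (scl a b c r) \<longleftrightarrow> valid r"
  by (simp add: valid_iff_coords)

lemma scl_scl [simp]: "scl a b c (scl a' b' c' r) = scl (a * a') (b * b') (c * c') r"
  by (rule rep_eqI) (simp_all add: mult.assoc)

lemma scl_1 [simp]: "scl 1 1 1 r = r"
  by (rule rep_eqI) simp_all

lemma equivp_proj_eq: "equivp proj_eq"
proof (rule equivpI)
  show "reflp proj_eq"
    by (rule reflpI) (auto simp: proj_eq_def intro!: exI[of _ 1])
  show "symp proj_eq"
  proof (rule sympI)
    fix r s assume "proj_eq r s"
    then obtain a b c where "a \<noteq> 0" "b \<noteq> 0" "c \<noteq> 0" "s = scl a b c r"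
      by (auto simp: proj_eq_def)
    then show "proj_eq s r"
      unfolding proj_eq_def by (intro exI[of _ "1/a"] exI[of _ "1/b"] exI[of _ "1/c"]) simp
  qed
  show "transp proj_eq"
  proof (rule transpI)
    fix r s q assume "proj_eq r s" "proj_eq s q"
    then obtain a b c a' b' c' where "a \<noteq> 0" "b \<noteq> 0" "c \<noteq> 0" "s = scl a b c r"
      "a' \<noteq> 0" "b' \<noteq> 0" "c' \<noteq> 0" "q = scl a' b' c' s"
      by (auto simp: proj_eq_def)
    then show "proj_eq r q"
      unfolding proj_eq_def by (intro exI[of _ "a' * a"] exI[of _ "b' * b"] exI[of _ "c' * c"]) simp
  qed
qed

lemma in_pt [simp]: "r \<in> pt r"
  using equivp_reflp[OF equivp_proj_eq] by (simp add: pt_def)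

lemma pt_eq_iff: "pt r = pt s \<longleftrightarrow> proj_eq r s"
  using equivp_proj_eq unfolding pt_def by (metis equivp_def mem_Collect_eq set_eq_iff)

lemma pt_scl [simp]: "a \<noteq> 0 \<Longrightarrow> b \<noteq> 0 \<Longrightarrow> c \<noteq> 0 \<Longrightarrow> pt (scl a b c r) = pt r"
  by (metis equivp_symp[OF equivp_proj_eq] pt_eq_iff proj_eq_def)

lemma pt_in_PP_iff [simp]: "pt r \<in> PP \<longleftrightarrow> valid r"
proof
  assume "pt r \<in> PP"
  then obtain s where "valid s" "pt r = pt s" unfolding PP_def by blast
  then have "proj_eq s r" by (metis pt_eq_iff)
  then show "valid r" using \<open>valid s\<close> by (auto simp: proj_eq_def)
qed (auto simp: PP_def)

lemma PP_cases [consumes 1]: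
  assumes "P \<in> PP" obtains r where "valid r" "P = pt r"
  using assms unfolding PP_def by blast

lemma zero_set_subset_PP: "zero_set E \<subseteq> PP"
  by (auto simp: zero_set_def)

lemma lift_pt:
  assumes "\<And>a b c s. a \<noteq> 0 \<Longrightarrow> b \<noteq> 0 \<Longrightarrow> c \<noteq> 0 \<Longrightarrow> pt (f (scl a b c s)) = pt (f s)"
  shows "lift f (pt r) = pt (f r)"
proof -
  have "(SOME s. s \<in> pt r) \<in> pt r" using in_pt by (rule someI)
  then obtain a b c where "a \<noteq> 0" "b \<noteq> 0" "c \<noteq> 0" "(SOME s. s \<in> pt r) = scl a b c r"
    unfolding pt_def proj_eq_def by blast
  then show ?thesis using assms by (simp add: lift_def)
qed

section \<open>Multihomogeneous polynomials and Zariski closed sets\<close>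

lemmas poly_fun_coords =
  poly_fun.cu1[folded cU1_def] poly_fun.cv1[folded cV1_def]
  poly_fun.cu2[folded cU2_def] poly_fun.cv2[folded cV2_def]
  poly_fun.cx[folded cX_def] poly_fun.cy[folded cY_def] poly_fun.cz[folded cZ_def]
  poly_fun.ct[folded cT_def] poly_fun.cw[folded cW_def]

lemma poly_fun_diff: "poly_fun f \<Longrightarrow> poly_fun g \<Longrightarrow> poly_fun (\<lambda>r. f r - g r)"
  using poly_fun.add[OF _ poly_fun.mult[OF poly_fun.const[of "-1"]], of f g] by simp

lemma poly_fun_power: "poly_fun f \<Longrightarrow> poly_fun (\<lambda>r. f r ^ n)"
  by (induction n) (simp_all add: poly_fun.const poly_fun.mult)

lemmas poly_fun_intros =
  poly_fun_coords poly_fun.const poly_fun.add poly_fun.mult poly_fun_diff poly_fun_power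

lemma mhom_polyI:
  "poly_fun f \<Longrightarrow> (\<And>a b c r. f (scl a b c r) = a ^ i * b ^ j * c ^ k * f r) \<Longrightarrow> mhom_poly f"
  unfolding mhom_poly_def by blast

lemma mhom_poly_mult:
  assumes "mhom_poly f" "mhom_poly g" shows "mhom_poly (\<lambda>r. f r * g r)"
proof -
  obtain i j k where f: "\<And>a b c r. f (scl a b c r) = a ^ i * b ^ j * c ^ k * f r"
    using assms(1) unfolding mhom_poly_def by blast
  obtain i' j' k' where g: "\<And>a b c r. g (scl a b c r) = a ^ i' * b ^ j' * c ^ k' * g r"
    using assms(2) unfolding mhom_poly_def by blast
  show ?thesis
  proof (rule mhom_polyI[where i="i + i'" and j="j + j'" and k="k + k'"])
    show "poly_fun (\<lambda>r. f r * g r)" using assms by (simp add: mhom_poly_def poly_fun.mult)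
  qed (simp add: f g power_add algebra_simps)
qed

lemma mhom_poly_scl_eq_0:
  assumes "mhom_poly f" "a \<noteq> 0" "b \<noteq> 0" "c \<noteq> 0"
  shows "f (scl a b c r) = 0 \<longleftrightarrow> f r = 0"
proof -
  obtain i j k where "\<And>a b c r. f (scl a b c r) = a ^ i * b ^ j * c ^ k * f r"
    using assms(1) unfolding mhom_poly_def by blast
  then show ?thesis using assms(2-4) by simp
qed

definition zero_locus :: "(rep \<Rightarrow> complex) set \<Rightarrow> rep set set" where
  "zero_locus F = zero_set (\<lambda>r. \<forall>f\<in>F. f r = 0)"

lemma pt_in_zero_locus_iff:
  assumes "\<forall>f\<in>F. mhom_poly f"
  shows "pt r \<in> zero_locus F \<longleftrightarrow> valid r \<and> (\<forall>f\<in>F. f r = 0)"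
proof -
  have "(\<forall>s\<in>pt r. \<forall>f\<in>F. f s = 0) \<longleftrightarrow> (\<forall>f\<in>F. f r = 0)"
  proof
    show "\<forall>s\<in>pt r. \<forall>f\<in>F. f s = 0" if "\<forall>f\<in>F. f r = 0"
    proof
      fix s assume "s \<in> pt r"
      then obtain a b c where "a \<noteq> 0" "b \<noteq> 0" "c \<noteq> 0" "s = scl a b c r"
        unfolding pt_def proj_eq_def by blast
      then show "\<forall>f\<in>F. f s = 0" using assms that by (simp add: mhom_poly_scl_eq_0)
    qed
  qed (use in_pt in blast)
  then show ?thesis by (simp add: zero_locus_def zero_set_def)
qed

lemma zclosed_iff_zero_locus: "zclosed S \<longleftrightarrow> (\<exists>F. (\<forall>f\<in>F. mhom_poly f) \<and> S = zero_locus F)"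
  by (simp add: zclosed_def zero_locus_def zero_set_def)

lemma zclosed_zero_locus: "\<forall>f\<in>F. mhom_poly f \<Longrightarrow> zclosed (zero_locus F)"
  by (auto simp: zclosed_iff_zero_locus)

lemma zclosed_subset_PP: "zclosed S \<Longrightarrow> S \<subseteq> PP"
  by (auto simp: zclosed_iff_zero_locus zero_locus_def zero_set_def)

lemma zclosed_Int: "zclosed A \<Longrightarrow> zclosed B \<Longrightarrow> zclosed (A \<inter> B)"
proof -
  assume "zclosed A" "zclosed B"
  then obtain F G where "\<forall>f\<in>F. mhom_poly f" "A = zero_locus F"
    and "\<forall>f\<in>G. mhom_poly f" "B = zero_locus G"
    by (auto simp: zclosed_iff_zero_locus)
  then have "A \<inter> B = zero_locus (F \<union> G)" "\<forall>f\<in>F \<union> G. mhom_poly f"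
    by (auto simp: zero_locus_def zero_set_def)
  then show ?thesis by (simp add: zclosed_zero_locus)
qed

text \<open>The union of two zero loci is cut out by the pairwise products.\<close>
lemma zclosed_Un: "zclosed A \<Longrightarrow> zclosed B \<Longrightarrow> zclosed (A \<union> B)"
proof -
  assume "zclosed A" "zclosed B"
  then obtain F G where F: "\<forall>f\<in>F. mhom_poly f" "A = zero_locus F"
    and G: "\<forall>f\<in>G. mhom_poly f" "B = zero_locus G"
    by (auto simp: zclosed_iff_zero_locus)
  define H where "H = (\<lambda>(f, g) r. f r * g r) ` (F \<times> G)"
  have H: "\<forall>h\<in>H. mhom_poly h" using F G by (auto simp: H_def intro: mhom_poly_mult)
  have "P \<in> A \<union> B \<longleftrightarrow> P \<in> zero_locus H" for P
  proof (cases "P \<in> PP")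
    case True
    then obtain r where "valid r" "P = pt r" by (rule PP_cases)
    moreover have "(\<forall>h\<in>H. h r = 0) \<longleftrightarrow> (\<forall>f\<in>F. \<forall>g\<in>G. f r * g r = 0)"
      by (simp add: H_def)
    then have "(\<forall>f\<in>F. f r = 0) \<or> (\<forall>g\<in>G. g r = 0) \<longleftrightarrow> (\<forall>h\<in>H. h r = 0)"
      by auto
    ultimately show ?thesis using F G H by (simp add: pt_in_zero_locus_iff)
  qed (use F G zero_set_subset_PP in \<open>auto simp: zero_locus_def\<close>)
  then have "A \<union> B = zero_locus H" by blast
  then show ?thesis using H by (simp add: zclosed_zero_locus)
qed

lemma zclosed_empty: "zclosed {}"
proof -
  have "mhom_poly (\<lambda>_. 1)"
    by (rule mhom_polyI[where i=0 and j=0 and k=0]) (simp_all add: poly_fun.const)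
  moreover have "zero_locus {\<lambda>_. 1} = {}"
  proof (rule equals0I)
    fix P assume "P \<in> zero_locus {\<lambda>_. 1}"
    then have P: "P \<in> PP" "\<forall>s\<in>P. (1::complex) = 0" by (simp_all add: zero_locus_def zero_set_def)
    from P(1) obtain r where "P = pt r" by (rule PP_cases)
    with P(2) show False by (metis in_pt one_neq_zero)
  qed
  ultimately show ?thesis using zclosed_zero_locus[of "{\<lambda>_. 1}"] by simp
qed

definition zclosure :: "rep set set \<Rightarrow> rep set set" where
  "zclosure S = zero_locus {f. mhom_poly f \<and> (\<forall>P\<in>S. \<forall>r\<in>P. f r = 0)}"

lemma zclosed_zclosure: "zclosed (zclosure S)"
  unfolding zclosure_def by (rule zclosed_zero_locus) simp

lemma zclosure_superset: "S \<subseteq> PP \<Longrightarrow> S \<subseteq> zclosure S"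
  by (auto simp: zclosure_def zero_locus_def zero_set_def)

lemma zclosure_minimal: "zclosed C \<Longrightarrow> S \<subseteq> C \<Longrightarrow> zclosure S \<subseteq> C"
  by (fastforce simp: zclosed_iff_zero_locus zclosure_def zero_locus_def zero_set_def)

section \<open>Points and curves\<close>

definition coords1 :: "(rep \<Rightarrow> complex) set" where "coords1 = {cU1, cV1}"
definition coords2 :: "(rep \<Rightarrow> complex) set" where "coords2 = {cU2, cV2}"
definition coords3 :: "(rep \<Rightarrow> complex) set" where "coords3 = {cX, cY, cZ, cT, cW}"

lemma valid_iff_coord_blocks:
  "valid r \<longleftrightarrow> (\<forall>B\<in>{coords1, coords2, coords3}. \<exists>f\<in>B. f r \<noteq> 0)"
  by (simp add: valid_iff_coords coords1_def coords2_def coords3_def)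

lemma proportional_if_minors_vanish:
  fixes F :: "('a \<Rightarrow> 'b::field) set"
  assumes minors: "\<forall>f\<in>F. \<forall>g\<in>F. f s * g r = g s * f r"
    and "\<exists>g\<in>F. g r \<noteq> 0" and "\<exists>h\<in>F. h s \<noteq> 0"
  shows "\<exists>k. k \<noteq> 0 \<and> (\<forall>f\<in>F. f s = k * f r)"
proof -
  obtain g where g: "g \<in> F" "g r \<noteq> 0" using assms(2) by blast
  obtain h where h: "h \<in> F" "h s \<noteq> 0" using assms(3) by blast
  define k where "k = g s / g r"
  have k: "\<forall>f\<in>F. f s = k * f r"
    using minors g by (auto simp: k_def field_simps)
  then have "k \<noteq> 0" using h by auto
  with k show ?thesis by blast
qed

lemma proportional_pair:
  fixes a b c d :: "'a::field"
  assumes "a * d = b * c" "a \<noteq> 0 \<or> b \<noteq> 0" "c \<noteq> 0 \<or> d \<noteq> 0"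
  shows "\<exists>k. k \<noteq> 0 \<and> c = k * a \<and> d = k * b"
  using proportional_if_minors_vanish[of "{fst, snd}" "(c, d)" "(a, b)"] assms
  by (auto simp: mult.commute)

definition minors :: "rep \<Rightarrow> (rep \<Rightarrow> complex) set" where
  "minors r = (\<Union>B\<in>{coords1, coords2, coords3}. (\<lambda>(f, g) s. f s * g r - g s * f r) ` (B \<times> B))"

lemma mhom_poly_minors: "\<forall>h\<in>minors r. mhom_poly h"
proof -
  have "mhom_poly (\<lambda>s. f s * g r - g s * f r)" if "f \<in> coords1" "g \<in> coords1" for f g
    using that unfolding coords1_def
    by (auto intro!: mhom_polyI[where i=1 and j=0 and k=0] poly_fun_intros simp: algebra_simps)
  moreover have "mhom_poly (\<lambda>s. f s * g r - g s * f r)" if "f \<in> coords2" "g \<in> coords2" for f g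
    using that unfolding coords2_def
    by (auto intro!: mhom_polyI[where i=0 and j=1 and k=0] poly_fun_intros simp: algebra_simps)
  moreover have "mhom_poly (\<lambda>s. f s * g r - g s * f r)" if "f \<in> coords3" "g \<in> coords3" for f g
    using that unfolding coords3_def
    by (auto intro!: mhom_polyI[where i=0 and j=0 and k=1] poly_fun_intros simp: algebra_simps)
  ultimately show ?thesis by (auto simp: minors_def)
qed

lemma zero_locus_minors:
  assumes r: "valid r" shows "zero_locus (minors r) = {pt r}"
proof
  have "\<forall>h\<in>minors r. h r = 0" by (auto simp: minors_def)
  then show "{pt r} \<subseteq> zero_locus (minors r)"
    using r by (simp add: pt_in_zero_locus_iff[OF mhom_poly_minors])
next
  show "zero_locus (minors r) \<subseteq> {pt r}"
  proof
    fix P assume P: "P \<in> zero_locus (minors r)"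
    then have "P \<in> PP" using zero_set_subset_PP unfolding zero_locus_def by blast
    then obtain s where s: "valid s" "P = pt s" by (rule PP_cases)
    then have vanish: "\<forall>h\<in>minors r. h s = 0"
      using P by (simp add: pt_in_zero_locus_iff[OF mhom_poly_minors])
    have proportional: "\<exists>k. k \<noteq> 0 \<and> (\<forall>f\<in>B. f s = k * f r)"
      if B: "B \<in> {coords1, coords2, coords3}" for B
    proof (rule proportional_if_minors_vanish)
      show "\<forall>f\<in>B. \<forall>g\<in>B. f s * g r = g s * f r"
      proof (intro ballI)
        fix f g assume "f \<in> B" "g \<in> B"
        then have "(\<lambda>q. f q * g r - g q * f r) \<in> minors r" using B unfolding minors_def by force
        from bspec[OF vanish this] show "f s * g r = g s * f r" by simp
      qed
      show "\<exists>g\<in>B. g r \<noteq> 0" "\<exists>h\<in>B. h s \<noteq> 0"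
        using r s(1) B unfolding valid_iff_coord_blocks by blast+
    qed
    obtain a where a: "a \<noteq> 0" "\<forall>f\<in>coords1. f s = a * f r" using proportional[of coords1] by blast
    obtain b where b: "b \<noteq> 0" "\<forall>f\<in>coords2. f s = b * f r" using proportional[of coords2] by blast
    obtain c where c: "c \<noteq> 0" "\<forall>f\<in>coords3. f s = c * f r" using proportional[of coords3] by blast
    have "s = scl a b c r"
      using a(2) b(2) c(2) by (intro rep_eqI) (simp_all add: coords1_def coords2_def coords3_def)
    then show "P \<in> {pt r}" using s a(1) b(1) c(1) by simp
  qed
qed

lemma zclosed_singleton: "P \<in> PP \<Longrightarrow> zclosed {P}"
  by (metis PP_cases zero_locus_minors zclosed_zero_locus mhom_poly_minors)

lemma zclosed_finite: "finite S \<Longrightarrow> S \<subseteq> PP \<Longrightarrow> zclosed S"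
proof (induction S rule: finite_induct)
  case (insert P S)
  then show ?case using zclosed_Un[OF zclosed_singleton] by (metis insert_is_Un insert_subset)
qed (rule zclosed_empty)

lemma zirreducible_singleton: "P \<in> PP \<Longrightarrow> zirreducible {P}"
  by (auto simp: zirreducible_def singleton_Un_iff zclosed_singleton)

lemma zirreducible_finite_singleton:
  assumes "zirreducible W" "finite W" shows "\<exists>P. W = {P}"
proof -
  obtain P where P: "P \<in> W" using assms(1) by (auto simp: zirreducible_def)
  have "W \<subseteq> PP" using assms(1) zclosed_subset_PP by (auto simp: zirreducible_def)
  then have "zclosed {P}" "zclosed (W - {P})"
    using P assms(2) by (simp_all add: subset_iff zclosed_singleton zclosed_finite)
  moreover have "W = {P} \<union> (W - {P})" using P by auto
  moreover have "\<And>A B. zclosed A \<Longrightarrow> zclosed B \<Longrightarrow> W = A \<union> B \<Longrightarrow> W = A \<or> W = B"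
    using assms(1) by (simp add: zirreducible_def)
  ultimately have "W = {P} \<or> W = W - {P}" by metis
  then show ?thesis using P by auto
qed

lemma irred_curve_psubset_singleton:
  assumes K: "irred_curve K" and W: "zirreducible W" "W \<subset> K" shows "\<exists>P. W = {P}"
proof -
  obtain P where P: "P \<in> W" using W(1) by (auto simp: zirreducible_def)
  then have "P \<in> PP" using W(1) zclosed_subset_PP by (auto simp: zirreducible_def)
  then have "zirreducible {P}" by (rule zirreducible_singleton)
  then have "\<not> {P} \<subset> W" using K W unfolding irred_curve_def by blast
  then show ?thesis using P by blast
qed

lemma irred_curveI:
  assumes closed: "zclosed K" and inf: "infinite K"
    and proper: "\<And>A. zclosed A \<Longrightarrow> A \<subset> K \<Longrightarrow> finite A"
  shows "irred_curve K"
proof -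
  have irr: "zirreducible K"
  proof (unfold zirreducible_def, intro conjI allI impI)
    fix A B assume AB: "zclosed A \<and> zclosed B \<and> K = A \<union> B"
    show "K = A \<or> K = B"
    proof (rule ccontr)
      assume "\<not> (K = A \<or> K = B)"
      then have "finite A" "finite B" using AB by (auto intro!: proper)
      with AB inf show False by simp
    qed
  qed (use closed inf in auto)
  obtain P where P: "P \<in> K" using inf by (metis ex_in_conv finite.emptyI)
  then have "P \<in> PP" using closed zclosed_subset_PP by blast
  then have "zirreducible {P}" "{P} \<subset> K" using P inf by (auto intro: zirreducible_singleton)
  moreover have False if "zirreducible W1" "zirreducible W2" "W2 \<subset> W1" "W1 \<subset> K" for W1 W2
  proof -
    have "finite W1" using proper[of W1] that(1,4) by (simp add: zirreducible_def)
    with that(1) obtain Q where "W1 = {Q}" using zirreducible_finite_singleton by blast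
    then have "W2 = {}" using that(3) by (auto simp: psubset_eq subset_singleton_iff)
    with that(2) show False by (simp add: zirreducible_def)
  qed
  ultimately show ?thesis using irr unfolding irred_curve_def by blast
qed

section \<open>Rational curves\<close>

definition poly_function :: "('a::comm_semiring_0 \<Rightarrow> 'a) \<Rightarrow> bool" where
  "poly_function f \<longleftrightarrow> (\<exists>p. f = poly p)"

lemma poly_function_const: "poly_function (\<lambda>_. c)"
  unfolding poly_function_def by (intro exI[of _ "[:c:]"]) auto

lemma poly_function_ident: "poly_function (\<lambda>s::'a::comm_semiring_1. s)"
  unfolding poly_function_def by (intro exI[of _ "[:0, 1:]"]) auto

lemma poly_function_add:
  assumes "poly_function f" "poly_function g" shows "poly_function (\<lambda>s. f s + g s)"
proof -
  obtain p q where "f = poly p" "g = poly q" using assms by (auto simp: poly_function_def)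
  then show ?thesis unfolding poly_function_def by (intro exI[of _ "p + q"]) auto
qed

lemma poly_function_mult:
  assumes "poly_function f" "poly_function g" shows "poly_function (\<lambda>s. f s * g s)"
proof -
  obtain p q where "f = poly p" "g = poly q" using assms by (auto simp: poly_function_def)
  then show ?thesis unfolding poly_function_def by (intro exI[of _ "p * q"]) auto
qed

lemma poly_function_uminus:
  assumes "poly_function f" shows "poly_function (\<lambda>s::'a::comm_ring. - f s)"
proof -
  obtain p where "f = poly p" using assms by (auto simp: poly_function_def)
  then show ?thesis unfolding poly_function_def by (intro exI[of _ "- p"]) auto
qed

lemmas poly_function_intros =
  poly_function_const poly_function_ident poly_function_add poly_function_mult poly_function_uminus

definition polynomial_map :: "(complex \<Rightarrow> rep) \<Rightarrow> bool" where
  "polynomial_map \<psi> \<longleftrightarrow> (\<forall>f\<in>coords1 \<union> coords2 \<union> coords3. poly_function (\<lambda>s. f (\<psi> s)))"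

lemma poly_function_pullback:
  assumes "poly_fun f" "polynomial_map \<psi>" shows "poly_function (\<lambda>s. f (\<psi> s))"
  using assms(1)
proof (induction rule: poly_fun.induct)
  case (add f g) from add.IH show ?case by (rule poly_function_add)
next
  case (mult f g) from mult.IH show ?case by (rule poly_function_mult)
qed (use assms(2) in \<open>simp_all add: poly_function_const polynomial_map_def
        coords1_def coords2_def coords3_def coord_defs\<close>)

lemma mhom_poly_pt_eq: "mhom_poly f \<Longrightarrow> pt r = pt q \<Longrightarrow> f r = 0 \<longleftrightarrow> f q = 0"
  by (auto simp: pt_eq_iff proj_eq_def mhom_poly_scl_eq_0)

lemma zclosed_separating_poly:
  assumes "zclosed A" "valid r" "pt r \<notin> A"
  obtains f where "mhom_poly f" "f r \<noteq> 0" "A \<subseteq> zero_locus {f}"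
proof -
  obtain F where F: "\<forall>f\<in>F. mhom_poly f" "A = zero_locus F"
    using assms(1) by (auto simp: zclosed_iff_zero_locus)
  then obtain f where "f \<in> F" "f r \<noteq> 0" using assms(2,3) by (auto simp: pt_in_zero_locus_iff)
  moreover have "A \<subseteq> zero_locus {f}"
    using F \<open>f \<in> F\<close> by (auto simp: zero_locus_def zero_set_def)
  ultimately show ?thesis using F(1) that by blast
qed

lemma zirreducible_zclosure_image:
  assumes \<psi>: "polynomial_map \<psi>" and U: "infinite U" and valid: "\<And>s. s \<in> U \<Longrightarrow> valid (\<psi> s)"
  shows "zirreducible (zclosure ((\<lambda>s. pt (\<psi> s)) ` U))"
proof -
  let ?S = "(\<lambda>s. pt (\<psi> s)) ` U"
  have S: "?S \<subseteq> zclosure ?S" using valid by (intro zclosure_superset) auto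
  have split: "?S \<subseteq> A \<or> ?S \<subseteq> B" if A: "zclosed A" and B: "zclosed B"
    and AB: "zclosure ?S = A \<union> B" for A B
  proof (rule ccontr)
    assume "\<not> (?S \<subseteq> A \<or> ?S \<subseteq> B)"
    then obtain s1 s2 where s1: "s1 \<in> U" "pt (\<psi> s1) \<notin> A" and s2: "s2 \<in> U" "pt (\<psi> s2) \<notin> B"
      by blast
    obtain f1 where f1: "mhom_poly f1" "f1 (\<psi> s1) \<noteq> 0" "A \<subseteq> zero_locus {f1}"
      using zclosed_separating_poly[OF A valid[OF s1(1)] s1(2)] .
    obtain f2 where f2: "mhom_poly f2" "f2 (\<psi> s2) \<noteq> 0" "B \<subseteq> zero_locus {f2}"
      using zclosed_separating_poly[OF B valid[OF s2(1)] s2(2)] .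
    obtain p1 p2 where p: "\<And>s. f1 (\<psi> s) = poly p1 s" "\<And>s. f2 (\<psi> s) = poly p2 s"
      using f1(1) f2(1) \<psi> poly_function_pullback unfolding mhom_poly_def poly_function_def by metis
    then have "p1 * p2 \<noteq> 0" using f1(2) f2(2) by auto
    then have "infinite (U - {s. poly (p1 * p2) s = 0})"
      using U poly_roots_finite Diff_infinite_finite by blast
    from infinite_imp_nonempty[OF this] obtain s where "s \<in> U - {s. poly (p1 * p2) s = 0}"
      by blast
    then have s: "s \<in> U" "poly p1 s \<noteq> 0" "poly p2 s \<noteq> 0" by simp_all
    have "pt (\<psi> s) \<in> A \<union> B" using S AB s(1) by blast
    moreover have "pt (\<psi> s) \<notin> zero_locus {f1}" "pt (\<psi> s) \<notin> zero_locus {f2}"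
      using f1(1) f2(1) p s by (simp_all add: pt_in_zero_locus_iff)
    ultimately show False using f1(3) f2(3) by blast
  qed
  show ?thesis unfolding zirreducible_def
  proof (intro conjI allI impI)
    show "zclosed (zclosure ?S)" by (rule zclosed_zclosure)
    show "zclosure ?S \<noteq> {}" using S U by auto
    fix A B assume AB: "zclosed A \<and> zclosed B \<and> zclosure ?S = A \<union> B"
    then have "?S \<subseteq> A \<or> ?S \<subseteq> B" by (intro split) auto
    then have "zclosure ?S \<subseteq> A \<or> zclosure ?S \<subseteq> B"
      using AB zclosure_minimal[of A ?S] zclosure_minimal[of B ?S] by blast
    then show "zclosure ?S = A \<or> zclosure ?S = B" using AB by blast
  qed
qed

lemma P1_image_charts:
  fixes \<phi> :: "complex \<Rightarrow> complex \<Rightarrow> rep"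
  assumes hom: "\<And>k a b. k \<noteq> 0 \<Longrightarrow> pt (\<phi> (k * a) (k * b)) = pt (\<phi> a b)"
  shows "{pt (\<phi> a b) | a b. a \<noteq> 0 \<or> b \<noteq> 0} = range (\<lambda>s. pt (\<phi> 1 s)) \<union> {pt (\<phi> 0 1)}"
proof
  show "{pt (\<phi> a b) | a b. a \<noteq> 0 \<or> b \<noteq> 0} \<subseteq> range (\<lambda>s. pt (\<phi> 1 s)) \<union> {pt (\<phi> 0 1)}"
  proof
    fix P assume "P \<in> {pt (\<phi> a b) | a b. a \<noteq> 0 \<or> b \<noteq> 0}"
    then obtain a b where P: "P = pt (\<phi> a b)" "a \<noteq> 0 \<or> b \<noteq> 0" by blast
    show "P \<in> range (\<lambda>s. pt (\<phi> 1 s)) \<union> {pt (\<phi> 0 1)}"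
    proof (cases "a = 0")
      case True
      then show ?thesis using P hom[of b 0 1] by simp
    next
      case False
      then show ?thesis using P hom[of a 1 "b / a"] by simp
    qed
  qed
next
  have "pt (\<phi> a b) \<in> {pt (\<phi> a b) | a b. a \<noteq> 0 \<or> b \<noteq> 0}" if "a \<noteq> 0 \<or> b \<noteq> 0" for a b
    using that by blast
  then show "range (\<lambda>s. pt (\<phi> 1 s)) \<union> {pt (\<phi> 0 1)} \<subseteq> {pt (\<phi> a b) | a b. a \<noteq> 0 \<or> b \<noteq> 0}"
    by auto
qed

text \<open>Along the second chart \<open>f\<close> is a polynomial in \<open>s\<close> vanishing for every \<open>s \<noteq> 0\<close>,
  hence also at \<open>s = 0\<close>.\<close>
lemma P1_image_vanishing_at_infinity:
  fixes \<phi> :: "complex \<Rightarrow> complex \<Rightarrow> rep"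
  assumes hom: "\<And>k a b. k \<noteq> 0 \<Longrightarrow> pt (\<phi> (k * a) (k * b)) = pt (\<phi> a b)"
    and chart2: "polynomial_map (\<lambda>s. \<phi> s 1)"
    and f: "mhom_poly f" "\<And>s. f (\<phi> 1 s) = 0"
  shows "f (\<phi> 0 1) = 0"
proof -
  obtain p where p: "\<And>s. f (\<phi> s 1) = poly p s"
    using f(1) chart2 poly_function_pullback unfolding mhom_poly_def poly_function_def by metis
  have "poly p s = 0" if "s \<noteq> 0" for s
    using p f(2) mhom_poly_pt_eq[OF f(1) hom[OF that, of 1 "1 / s"]] that by simp
  then have "UNIV - {0} \<subseteq> {s. poly p s = 0}" by blast
  moreover have "infinite (UNIV - {0::complex})"
    using infinite_UNIV_char_0 by (rule Diff_infinite_finite[rotated]) simp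
  ultimately have "infinite {s. poly p s = 0}" by (rule infinite_super)
  then have "p = 0" using poly_roots_finite by blast
  then show ?thesis using p[of 0] by simp
qed

text \<open>A form not vanishing on all of \<open>K\<close> has only finitely many zeros on the first chart,
  so every proper closed subset of \<open>K\<close> is finite.\<close>
lemma irred_curve_P1_image:
  fixes \<phi> :: "complex \<Rightarrow> complex \<Rightarrow> rep"
  assumes hom: "\<And>k a b. k \<noteq> 0 \<Longrightarrow> pt (\<phi> (k * a) (k * b)) = pt (\<phi> a b)"
    and chart1: "polynomial_map (\<lambda>s. \<phi> 1 s)" and chart2: "polynomial_map (\<lambda>s. \<phi> s 1)"
    and inj: "inj (\<lambda>s. pt (\<phi> 1 s))"
    and K: "K = {pt (\<phi> a b) | a b. a \<noteq> 0 \<or> b \<noteq> 0}" and closed: "zclosed K"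
  shows "irred_curve K"
proof (rule irred_curveI[OF closed])
  have K_charts: "K = range (\<lambda>s. pt (\<phi> 1 s)) \<union> {pt (\<phi> 0 1)}"
    using P1_image_charts[of \<phi>, OF hom] K by simp
  have "infinite (range (\<lambda>s. pt (\<phi> 1 s)))"
    using inj infinite_UNIV_char_0 finite_imageD by blast
  then show "infinite K" unfolding K_charts by simp
  fix A assume A: "zclosed A" "A \<subset> K"
  then obtain P where "P \<in> K" "P \<notin> A" by blast
  then obtain r where r: "P = pt r" "valid r" using closed zclosed_subset_PP
    by (blast elim: PP_cases)
  obtain f where f: "mhom_poly f" "f r \<noteq> 0" "A \<subseteq> zero_locus {f}"
    using zclosed_separating_poly[OF A(1) r(2)] \<open>P \<notin> A\<close> r(1) by blast
  obtain p where p: "\<And>s. f (\<phi> 1 s) = poly p s"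
    using f(1) chart1 poly_function_pullback unfolding mhom_poly_def poly_function_def by metis
  have "p \<noteq> 0"
  proof
    assume "p = 0"
    then have "f (\<phi> 1 s) = 0" "f (\<phi> 0 1) = 0" for s
      using p P1_image_vanishing_at_infinity[of \<phi>, OF hom chart2 f(1)] by simp_all
    moreover have "P \<in> range (\<lambda>s. pt (\<phi> 1 s)) \<union> {pt (\<phi> 0 1)}" using \<open>P \<in> K\<close> K_charts by simp
    ultimately show False using r(1) f(2) mhom_poly_pt_eq[OF f(1)] by blast
  qed
  have "A \<subseteq> (\<lambda>s. pt (\<phi> 1 s)) ` {s. poly p s = 0} \<union> {pt (\<phi> 0 1)}"
  proof
    fix Q assume "Q \<in> A"
    then have "Q \<in> range (\<lambda>s. pt (\<phi> 1 s)) \<union> {pt (\<phi> 0 1)}" using A(2) K_charts by blast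
    then consider s where "Q = pt (\<phi> 1 s)" | "Q = pt (\<phi> 0 1)" by blast
    then show "Q \<in> (\<lambda>s. pt (\<phi> 1 s)) ` {s. poly p s = 0} \<union> {pt (\<phi> 0 1)}"
    proof cases
      case (1 s)
      then have "poly p s = 0" using \<open>Q \<in> A\<close> f(1,3) p[of s] by (auto simp: pt_in_zero_locus_iff)
      with 1 show ?thesis by blast
    qed simp
  qed
  moreover have "finite {s. poly p s = 0}" using \<open>p \<noteq> 0\<close> by (rule poly_roots_finite)
  ultimately show "finite A" using finite_subset by blast
qed

section \<open>The threefold, the two curves and the group\<close>

definition X_polys :: "(rep \<Rightarrow> complex) set" where
  "X_polys = {\<lambda>r. cU1 r * cX r - cV1 r * cY r, \<lambda>r. cU2 r * cZ r - cV2 r * cT r,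
              \<lambda>r. cW r ^ 2 + (cX r + cZ r) * (cY r + cT r)}"

definition C_polys :: "(rep \<Rightarrow> complex) set" where
  "C_polys = {cW, \<lambda>r. cX r + cZ r, \<lambda>r. cY r + cT r, \<lambda>r. cU1 r * cZ r - cV1 r * cT r,
              \<lambda>r. cU2 r * cZ r - cV2 r * cT r, \<lambda>r. cV1 r * cU2 r - cU1 r * cV2 r}"

definition C'_polys :: "(rep \<Rightarrow> complex) set" where
  "C'_polys = X_polys \<union> {\<lambda>r. cX r - cZ r, \<lambda>r. cT r - cY r}"

lemma mhom_X_polys: "\<forall>f\<in>X_polys. mhom_poly f"
proof -
  have "mhom_poly (\<lambda>r. cU1 r * cX r - cV1 r * cY r)"
    by (rule mhom_polyI[where i=1 and j=0 and k=1])
      (auto intro!: poly_fun_intros simp: algebra_simps)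
  moreover have "mhom_poly (\<lambda>r. cU2 r * cZ r - cV2 r * cT r)"
    by (rule mhom_polyI[where i=0 and j=1 and k=1])
      (auto intro!: poly_fun_intros simp: algebra_simps)
  moreover have "mhom_poly (\<lambda>r. cW r ^ 2 + (cX r + cZ r) * (cY r + cT r))"
    by (rule mhom_polyI[where i=0 and j=0 and k=2])
      (auto intro!: poly_fun_intros simp: algebra_simps power2_eq_square)
  ultimately show ?thesis by (simp add: X_polys_def)
qed

lemma mhom_C_polys: "\<forall>f\<in>C_polys. mhom_poly f"
proof -
  have "mhom_poly cW"
    by (rule mhom_polyI[where i=0 and j=0 and k=1]) (auto intro!: poly_fun_intros)
  moreover have "mhom_poly (\<lambda>r. cX r + cZ r)" "mhom_poly (\<lambda>r. cY r + cT r)"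
    by (rule mhom_polyI[where i=0 and j=0 and k=1],
        auto intro!: poly_fun_intros simp: algebra_simps)+
  moreover have "mhom_poly (\<lambda>r. cU1 r * cZ r - cV1 r * cT r)"
    by (rule mhom_polyI[where i=1 and j=0 and k=1])
      (auto intro!: poly_fun_intros simp: algebra_simps)
  moreover have "mhom_poly (\<lambda>r. cU2 r * cZ r - cV2 r * cT r)"
    by (rule mhom_polyI[where i=0 and j=1 and k=1])
      (auto intro!: poly_fun_intros simp: algebra_simps)
  moreover have "mhom_poly (\<lambda>r. cV1 r * cU2 r - cU1 r * cV2 r)"
    by (rule mhom_polyI[where i=1 and j=1 and k=0])
      (auto intro!: poly_fun_intros simp: algebra_simps)
  ultimately show ?thesis by (simp add: C_polys_def)
qed

lemma mhom_C'_polys: "\<forall>f\<in>C'_polys. mhom_poly f"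
proof -
  have "mhom_poly (\<lambda>r. cX r - cZ r)" "mhom_poly (\<lambda>r. cT r - cY r)"
    by (rule mhom_polyI[where i=0 and j=0 and k=1],
        auto intro!: poly_fun_intros simp: algebra_simps)+
  then show ?thesis using mhom_X_polys by (simp add: C'_polys_def)
qed

lemma XX_eq_zero_locus: "XX = zero_locus X_polys"
  unfolding XX_def zero_locus_def
  by (rule arg_cong[where f = zero_set]) (simp add: fun_eq_iff X_polys_def coord_defs)

lemma CC_eq_zero_locus: "CC = zero_locus C_polys"
  unfolding CC_def zero_locus_def
  by (rule arg_cong[where f = zero_set]) (simp add: fun_eq_iff C_polys_def coord_defs)

lemma CC'_eq_zero_locus: "CC' = zero_locus C'_polys"
proof -
  have "zero_set (\<lambda>((u1,v1),(u2,v2),(x,y,z,t,w)). x = z \<and> t = y)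
      = zero_locus {\<lambda>r. cX r - cZ r, \<lambda>r. cT r - cY r}"
    unfolding zero_locus_def by (rule arg_cong[where f = zero_set])
      (simp add: fun_eq_iff coord_defs)
  then show ?thesis
    by (simp add: CC'_def XX_eq_zero_locus C'_polys_def zero_locus_def zero_set_def) blast
qed

lemma pt_in_XX_iff:
  "pt r \<in> XX \<longleftrightarrow> valid r \<and> cU1 r * cX r = cV1 r * cY r \<and> cU2 r * cZ r = cV2 r * cT r \<and>
     cW r ^ 2 + (cX r + cZ r) * (cY r + cT r) = 0"
  unfolding XX_eq_zero_locus pt_in_zero_locus_iff[OF mhom_X_polys] by (simp add: X_polys_def)

lemma pt_in_CC_iff:
  "pt r \<in> CC \<longleftrightarrow> valid r \<and> cW r = 0 \<and> cX r + cZ r = 0 \<and> cY r + cT r = 0 \<and>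
     cU1 r * cZ r = cV1 r * cT r \<and> cU2 r * cZ r = cV2 r * cT r \<and> cV1 r * cU2 r = cU1 r * cV2 r"
  unfolding CC_eq_zero_locus pt_in_zero_locus_iff[OF mhom_C_polys] by (simp add: C_polys_def)

lemma pt_in_CC'_iff: "pt r \<in> CC' \<longleftrightarrow> pt r \<in> XX \<and> cX r = cZ r \<and> cT r = cY r"
  unfolding CC'_eq_zero_locus pt_in_zero_locus_iff[OF mhom_C'_polys] pt_in_XX_iff
  by (auto simp: C'_polys_def X_polys_def)

lemma zclosed_CC: "zclosed CC"
  by (simp add: CC_eq_zero_locus zclosed_zero_locus mhom_C_polys)

lemma zclosed_CC': "zclosed CC'"
  by (simp add: CC'_eq_zero_locus zclosed_zero_locus mhom_C'_polys)

lemma XX_subset_PP: "XX \<subseteq> PP"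
  by (simp add: XX_def zero_set_subset_PP)

lemma CC_subset_XX: "CC \<subseteq> XX"
proof
  fix P assume "P \<in> CC"
  moreover from this obtain r where "P = pt r" using zclosed_CC zclosed_subset_PP
    by (blast elim: PP_cases)
  ultimately show "P \<in> XX"
    by (auto simp: pt_in_CC_iff pt_in_XX_iff eq_neg_iff_add_eq_0[symmetric])
qed

lemma CC'_subset_XX: "CC' \<subseteq> XX"
  by (simp add: CC'_def)

lemma coords_tau1 [simp]:
  "cU1 (tau1 r) = cV1 r" "cV1 (tau1 r) = cU1 r" "cU2 (tau1 r) = cV2 r" "cV2 (tau1 r) = cU2 r"
  "cX (tau1 r) = cY r" "cY (tau1 r) = cX r" "cZ (tau1 r) = cT r" "cT (tau1 r) = cZ r"
  "cW (tau1 r) = cW r"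
  by (simp_all add: tau1_def coord_defs split: prod.splits)

lemma coords_tau2 [simp]:
  "cU1 (tau2 r) = cU2 r" "cV1 (tau2 r) = cV2 r" "cU2 (tau2 r) = cU1 r" "cV2 (tau2 r) = cV1 r"
  "cX (tau2 r) = cZ r" "cY (tau2 r) = cT r" "cZ (tau2 r) = cX r" "cT (tau2 r) = cY r"
  "cW (tau2 r) = cW r"
  by (simp_all add: tau2_def coord_defs split: prod.splits)

lemma coords_tau3 [simp]:
  "cU1 (tau3 r) = cU1 r" "cV1 (tau3 r) = cV1 r" "cU2 (tau3 r) = cU2 r" "cV2 (tau3 r) = cV2 r"
  "cX (tau3 r) = cX r" "cY (tau3 r) = cY r" "cZ (tau3 r) = cZ r" "cT (tau3 r) = cT r"
  "cW (tau3 r) = - cW r"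
  by (simp_all add: tau3_def coord_defs split: prod.splits)

lemma coords_gam [simp]:
  "cU1 (gam l r) = cU1 r / l" "cV1 (gam l r) = l * cV1 r"
  "cU2 (gam l r) = cU2 r / l" "cV2 (gam l r) = l * cV2 r"
  "cX (gam l r) = l * cX r" "cY (gam l r) = cY r / l" "cZ (gam l r) = l * cZ r"
  "cT (gam l r) = cT r / l" "cW (gam l r) = cW r"
  by (simp_all add: gam_def coord_defs split: prod.splits)

lemma tau_involutive [simp]: "tau1 (tau1 r) = r" "tau2 (tau2 r) = r" "tau3 (tau3 r) = r"
  by (rule rep_eqI; simp)+

lemma gam_gam: "gam l (gam m r) = gam (l * m) r"
  by (rule rep_eqI) (simp_all add: mult.assoc mult.left_commute)

lemma gam_1 [simp]: "gam 1 r = r"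
  by (rule rep_eqI) simp_all

lemma lift_generators:
  "lift tau1 (pt r) = pt (tau1 r)" "lift tau2 (pt r) = pt (tau2 r)" "lift tau3 (pt r) = pt (tau3 r)"
  "lift (gam l) (pt r) = pt (gam l r)"
proof -
  have "tau1 (scl a b c s) = scl a b c (tau1 s)" "tau2 (scl a b c s) = scl b a c (tau2 s)"
    "tau3 (scl a b c s) = scl a b c (tau3 s)" "gam l (scl a b c s) = scl a b c (gam l s)"
    for a b c s
    by (rule rep_eqI; simp)+
  then show "lift tau1 (pt r) = pt (tau1 r)" "lift tau2 (pt r) = pt (tau2 r)"
    "lift tau3 (pt r) = pt (tau3 r)" "lift (gam l) (pt r) = pt (gam l r)"
    by (simp_all add: lift_pt)
qed

lemma valid_generators [simp]:
  "valid (tau1 r) \<longleftrightarrow> valid r" "valid (tau2 r) \<longleftrightarrow> valid r" "valid (tau3 r) \<longleftrightarrow> valid r"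
  "l \<noteq> 0 \<Longrightarrow> valid (gam l r) \<longleftrightarrow> valid r"
  by (auto simp: valid_iff_coords)

lemma pt_gam_in_iff:
  assumes "l \<noteq> 0"
  shows "pt (gam l r) \<in> XX \<longleftrightarrow> pt r \<in> XX" "pt (gam l r) \<in> CC \<longleftrightarrow> pt r \<in> CC"
    "pt (gam l r) \<in> CC' \<longleftrightarrow> pt r \<in> CC'"
proof -
  have "(l * cX r + l * cZ r) * (cY r / l + cT r / l) = (cX r + cZ r) * (cY r + cT r)"
    "l * cX r + l * cZ r = l * (cX r + cZ r)" "cY r / l + cT r / l = (cY r + cT r) / l"
    using assms by (simp_all add: field_simps)
  then show "pt (gam l r) \<in> XX \<longleftrightarrow> pt r \<in> XX" "pt (gam l r) \<in> CC \<longleftrightarrow> pt r \<in> CC"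
    "pt (gam l r) \<in> CC' \<longleftrightarrow> pt r \<in> CC'"
    using assms by (simp_all add: pt_in_XX_iff pt_in_CC_iff pt_in_CC'_iff)
qed

lemma pt_tau2_in_CC_iff: "pt (tau2 r) \<in> CC \<longleftrightarrow> pt r \<in> CC"
proof (cases "cX r + cZ r = 0 \<and> cY r + cT r = 0")
  case True
  have swap: "a * x = b * y \<longleftrightarrow> a * z = b * t" if "x + z = 0" "y + t = 0" for a b x y z t :: complex
    using that by (simp add: eq_neg_iff_add_eq_0[symmetric])
  show ?thesis
    using True swap[of "cX r" "cZ r" "cY r" "cT r"]
    by (auto simp: pt_in_CC_iff add.commute mult.commute)
qed (auto simp: pt_in_CC_iff add.commute)

lemma bij_betw_lift:
  assumes K: "K \<subseteq> PP"
    and f: "\<And>r. lift f (pt r) = pt (f r)" and g: "\<And>r. lift g (pt r) = pt (g r)"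
    and gf: "\<And>r. g (f r) = r" and fg: "\<And>r. f (g r) = r"
    and fK: "\<And>r. pt (f r) \<in> K \<longleftrightarrow> pt r \<in> K"
  shows "bij_betw (lift f) K K"
proof (rule bij_betw_byWitness[where f' = "lift g"])
  show "\<forall>P\<in>K. lift g (lift f P) = P" "\<forall>P\<in>K. lift f (lift g P) = P"
    using K by (auto simp: f g gf fg elim!: PP_cases)
  show "lift f ` K \<subseteq> K" using K by (auto simp: f fK elim!: PP_cases)
  show "lift g ` K \<subseteq> K"
  proof
    fix Q assume "Q \<in> lift g ` K"
    then obtain P where P: "P \<in> K" "Q = lift g P" by blast
    then obtain r where "P = pt r" using K by (blast elim: PP_cases)
    then show "Q \<in> K" using P fK[of "g r"] by (simp add: g fg)
  qed
qed

lemma lift_preserves_XX_CC_CC':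
  assumes "\<And>r. lift f (pt r) = pt (f r)" "\<And>r. lift g (pt r) = pt (g r)"
    and "\<And>r. g (f r) = r" "\<And>r. f (g r) = r"
    and "\<And>r. pt (f r) \<in> XX \<longleftrightarrow> pt r \<in> XX"
    and "\<And>r. pt (f r) \<in> CC \<longleftrightarrow> pt r \<in> CC"
    and "\<And>r. pt (f r) \<in> CC' \<longleftrightarrow> pt r \<in> CC'"
  shows "bij_betw (lift f) XX XX \<and> lift f ` CC = CC \<and> lift f ` CC' = CC'"
proof -
  have "bij_betw (lift f) XX XX" by (rule bij_betw_lift[OF XX_subset_PP assms(1-5)])
  moreover have "bij_betw (lift f) CC CC"
    by (rule bij_betw_lift[OF zclosed_subset_PP[OF zclosed_CC] assms(1-4,6)])
  moreover have "bij_betw (lift f) CC' CC'"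
    by (rule bij_betw_lift[OF zclosed_subset_PP[OF zclosed_CC'] assms(1-4,7)])
  ultimately show ?thesis by (simp add: bij_betw_def)
qed

text \<open>Bijectivity on \<open>XX\<close> is part of the invariant because \<open>GG\<close> is closed under
  \<open>inv_into XX\<close>.\<close>
lemma GG_preserves_XX_CC_CC': "g \<in> GG \<Longrightarrow> bij_betw g XX XX \<and> g ` CC = CC \<and> g ` CC' = CC'"
proof (induction rule: GG.induct)
  case gid
  show ?case by (simp add: bij_betw_def)
next
  case gt1
  show ?case by (rule lift_preserves_XX_CC_CC'[OF lift_generators(1) lift_generators(1)])
    (auto simp: pt_in_XX_iff pt_in_CC_iff pt_in_CC'_iff algebra_simps)
next
  case gt2
  show ?case by (rule lift_preserves_XX_CC_CC'[OF lift_generators(2) lift_generators(2)])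
    (auto simp: pt_in_XX_iff pt_tau2_in_CC_iff pt_in_CC'_iff algebra_simps)
next
  case gt3
  show ?case by (rule lift_preserves_XX_CC_CC'[OF lift_generators(3) lift_generators(3)])
    (auto simp: pt_in_XX_iff pt_in_CC_iff pt_in_CC'_iff algebra_simps)
next
  case (ggam l)
  show ?case
    by (rule lift_preserves_XX_CC_CC'[of "gam l" "gam (1 / l)",
          OF lift_generators(4) lift_generators(4)])
    (use ggam in \<open>simp_all add: gam_gam pt_gam_in_iff\<close>)
next
  case (gcomp g h)
  then have "bij_betw (g \<circ> h) XX XX" using bij_betw_trans[of h XX XX g XX] by blast
  moreover have "(g \<circ> h) ` CC = CC" "(g \<circ> h) ` CC' = CC'"
    using gcomp.IH by (simp_all add: image_image[symmetric])
  ultimately show ?case by blast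
next
  case (ginv g)
  then have bij: "bij_betw g XX XX" and img: "g ` CC = CC" "g ` CC' = CC'" by blast+
  have "bij_betw (inv_into XX g) XX XX" using bij by (rule bij_betw_inv_into)
  moreover have "inv_into XX g ` CC = CC" "inv_into XX g ` CC' = CC'"
    using inv_into_image_cancel[OF bij_betw_imp_inj_on[OF bij]] CC_subset_XX CC'_subset_XX img
    by metis+
  ultimately show ?case by blast
qed

section \<open>The curves \<open>C\<close> and \<open>C'\<close>\<close>

lemma conic_param:
  fixes x y w :: complex
  assumes "w ^ 2 = - 4 * x * y"
  obtains a b where "a * a = - y" "2 * a * b = w" "b * b = x"
proof -
  obtain b where b: "b * b = x" using power2_csqrt by (metis power2_eq_square)
  obtain a0 where a0: "a0 * a0 = - y" using power2_csqrt by (metis power2_eq_square)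
  have "(2 * a0 * b) ^ 2 = 4 * (a0 * a0) * (b * b)" by (simp add: power2_eq_square algebra_simps)
  also have "\<dots> = w ^ 2" using assms a0 b by (simp add: algebra_simps)
  finally have "2 * a0 * b = w \<or> 2 * a0 * b = - w" by (simp add: power2_eq_iff)
  then show ?thesis
  proof
    assume "2 * a0 * b = w" then show ?thesis using that a0 b by blast
  next
    assume "2 * a0 * b = - w"
    then have "2 * (- a0) * b = w" by simp
    then show ?thesis using that[of "- a0" b] a0 b by simp
  qed
qed

definition C_param :: "complex \<Rightarrow> complex \<Rightarrow> rep" where
  "C_param a b = ((a, b), (a, b), (- b, - a, b, a, 0))"

definition C'_param :: "complex \<Rightarrow> complex \<Rightarrow> rep" where
  "C'_param a b =
     ((- (a * a), b * b), (- (a * a), b * b), (b * b, - (a * a), b * b, - (a * a), 2 * a * b))"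

lemma CC_eq_C_param_image: "CC = {pt (C_param a b) | a b. a \<noteq> 0 \<or> b \<noteq> 0}"
proof (intro set_eqI iffI)
  fix P assume "P \<in> CC"
  then obtain r where r: "P = pt r" "pt r \<in> CC" using zclosed_CC zclosed_subset_PP
    by (blast elim: PP_cases)
  then have eqs: "valid r" "cW r = 0" "cX r = - cZ r" "cY r = - cT r" "cU1 r * cZ r = cV1 r * cT r"
    "cU2 r * cZ r = cV2 r * cT r" "cV1 r * cU2 r = cU1 r * cV2 r"
    by (auto simp: pt_in_CC_iff eq_neg_iff_add_eq_0)
  then have uv: "cU1 r \<noteq> 0 \<or> cV1 r \<noteq> 0" "cU2 r \<noteq> 0 \<or> cV2 r \<noteq> 0" "cZ r \<noteq> 0 \<or> cT r \<noteq> 0"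
    by (auto simp: valid_iff_coords)
  obtain k where k: "k \<noteq> 0" "cU2 r = k * cU1 r" "cV2 r = k * cV1 r"
    using proportional_pair[of "cU1 r" "cV2 r" "cV1 r" "cU2 r"] eqs(7) uv(1,2)
    by (auto simp: mult.commute)
  obtain m where m: "m \<noteq> 0" "cZ r = m * cV1 r" "cT r = m * cU1 r"
    using proportional_pair[of "cV1 r" "cT r" "cU1 r" "cZ r"] eqs(5) uv(1,3)
    by (auto simp: mult.commute)
  have "scl 1 k m (C_param (cU1 r) (cV1 r)) = r"
    by (rule rep_eqI) (simp_all add: C_param_def eqs k m)
  then have "P = pt (C_param (cU1 r) (cV1 r))"
    using pt_scl[OF one_neq_zero k(1) m(1), of "C_param (cU1 r) (cV1 r)"] r(1) by simp
  then show "P \<in> {pt (C_param a b) | a b. a \<noteq> 0 \<or> b \<noteq> 0}" using uv(1) by blast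
next
  fix P assume "P \<in> {pt (C_param a b) | a b. a \<noteq> 0 \<or> b \<noteq> 0}"
  then show "P \<in> CC" by (auto simp: C_param_def pt_in_CC_iff valid_iff_coords)
qed

lemma CC'_eq_C'_param_image: "CC' = {pt (C'_param a b) | a b. a \<noteq> 0 \<or> b \<noteq> 0}"
proof (intro set_eqI iffI)
  fix P assume "P \<in> CC'"
  then obtain r where r: "P = pt r" "pt r \<in> CC'" using zclosed_CC' zclosed_subset_PP
    by (blast elim: PP_cases)
  then have eqs: "valid r" "cZ r = cX r" "cT r = cY r" "cU1 r * cX r = cV1 r * cY r"
    "cU2 r * cX r = cV2 r * cY r" "cW r ^ 2 = - 4 * cX r * cY r"
    by (auto simp: pt_in_CC'_iff pt_in_XX_iff algebra_simps eq_neg_iff_add_eq_0)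
  obtain a b where a: "a * a = - cY r" "2 * a * b = cW r" and b: "b * b = cX r"
    using conic_param[OF eqs(6)] .
  have ab: "a \<noteq> 0 \<or> b \<noteq> 0" using eqs(1-3) a b by (auto simp: valid_iff_coords)
  then have ab2: "- (a * a) \<noteq> 0 \<or> b * b \<noteq> 0" by auto
  have uv: "cU1 r \<noteq> 0 \<or> cV1 r \<noteq> 0" "cU2 r \<noteq> 0 \<or> cV2 r \<noteq> 0"
    using eqs(1) by (auto simp: valid_iff_coords)
  obtain k where k: "k \<noteq> 0" "cU1 r = k * - (a * a)" "cV1 r = k * (b * b)"
    using proportional_pair[of "- (a * a)" "cV1 r" "b * b" "cU1 r"] eqs(4) a b ab2 uv(1)
    by (auto simp: algebra_simps)
  obtain m where m: "m \<noteq> 0" "cU2 r = m * - (a * a)" "cV2 r = m * (b * b)"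
    using proportional_pair[of "- (a * a)" "cV2 r" "b * b" "cU2 r"] eqs(5) a b ab2 uv(2)
    by (auto simp: algebra_simps)
  have "scl k m 1 (C'_param a b) = r"
    by (rule rep_eqI) (simp_all add: C'_param_def eqs k m a b)
  then have "P = pt (C'_param a b)"
    using pt_scl[OF k(1) m(1) one_neq_zero, of "C'_param a b"] r(1) by simp
  then show "P \<in> {pt (C'_param a b) | a b. a \<noteq> 0 \<or> b \<noteq> 0}" using ab by blast
next
  fix P assume "P \<in> {pt (C'_param a b) | a b. a \<noteq> 0 \<or> b \<noteq> 0}"
  then show "P \<in> CC'"
    by (auto simp: C'_param_def pt_in_CC'_iff pt_in_XX_iff valid_iff_coords algebra_simps
        power2_eq_square)
qed

lemma irred_curve_CC: "irred_curve CC"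
proof (rule irred_curve_P1_image[OF _ _ _ _ CC_eq_C_param_image zclosed_CC])
  show "pt (C_param (k * a) (k * b)) = pt (C_param a b)" if "k \<noteq> 0" for k a b
  proof -
    have "C_param (k * a) (k * b) = scl k k k (C_param a b)" by (rule rep_eqI)
      (simp_all add: C_param_def)
    then show ?thesis using that by simp
  qed
  show "polynomial_map (\<lambda>s. C_param 1 s)" "polynomial_map (\<lambda>s. C_param s 1)"
    by (auto simp: polynomial_map_def coords1_def coords2_def coords3_def C_param_def
        intro!: poly_function_intros)
  show "inj (\<lambda>s. pt (C_param 1 s))"
    by (rule injI) (auto simp: pt_eq_iff proj_eq_def C_param_def scl_def)
qed

lemma irred_curve_CC': "irred_curve CC'"
proof (rule irred_curve_P1_image[OF _ _ _ _ CC'_eq_C'_param_image zclosed_CC'])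
  show "pt (C'_param (k * a) (k * b)) = pt (C'_param a b)" if "k \<noteq> 0" for k a b
  proof -
    have "C'_param (k * a) (k * b) = scl (k * k) (k * k) (k * k) (C'_param a b)"
      by (rule rep_eqI) (simp_all add: C'_param_def algebra_simps)
    then show ?thesis using that by simp
  qed
  show "polynomial_map (\<lambda>s. C'_param 1 s)" "polynomial_map (\<lambda>s. C'_param s 1)"
    by (auto simp: polynomial_map_def coords1_def coords2_def coords3_def C'_param_def
        intro!: poly_function_intros)
  show "inj (\<lambda>s. pt (C'_param 1 s))"
    by (rule injI) (auto simp: pt_eq_iff proj_eq_def C'_param_def scl_def)
qed

section \<open>Invariant points and curves\<close>

lemma gam_fixed_point:
  assumes "pt (gam l r) = pt r" "cU1 r \<noteq> 0" "cV1 r \<noteq> 0" shows "l * l = 1"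
proof -
  obtain a b c where eq: "r = scl a b c (gam l r)"
    using assms(1) unfolding pt_eq_iff proj_eq_def by blast
  have "cU1 r = a * (cU1 r / l)" "cV1 r = a * (l * cV1 r)"
    using arg_cong[OF eq, of cU1] arg_cong[OF eq, of cV1] by simp_all
  moreover from this(1) have "l \<noteq> 0" using assms(2) by auto
  ultimately have "cU1 r * l = cU1 r * a" "cV1 r * (a * l) = cV1 r * 1"
    by (simp_all add: field_simps)
  then show ?thesis using assms(2,3) by simp
qed

lemma tau1_fixed_point:
  assumes "valid r" "pt (tau1 r) = pt r" shows "cU1 r \<noteq> 0" "cV1 r \<noteq> 0"
proof -
  obtain a b c where eq: "r = scl a b c (tau1 r)"
    using assms(2) unfolding pt_eq_iff proj_eq_def by blast
  have "cU1 r = a * cV1 r" "cV1 r = a * cU1 r"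
    using arg_cong[OF eq, of cU1] arg_cong[OF eq, of cV1] by simp_all
  then show "cU1 r \<noteq> 0" "cV1 r \<noteq> 0" using assms(1) by (auto simp: valid_iff_coords)
qed

lemma no_GG_fixed_point: "P \<in> PP \<Longrightarrow> \<exists>g\<in>GG. g P \<noteq> P"
proof (rule ccontr)
  assume "P \<in> PP" "\<not> (\<exists>g\<in>GG. g P \<noteq> P)"
  moreover obtain r where r: "valid r" "P = pt r" using \<open>P \<in> PP\<close> by (rule PP_cases)
  ultimately have "pt (tau1 r) = pt r" "pt (gam 2 r) = pt r"
    using GG.gt1 GG.ggam[of 2] by (auto simp: lift_generators(1) lift_generators(4))
  then show False using tau1_fixed_point[OF r(1)] gam_fixed_point[of 2 r] by simp
qed

text \<open>Otherwise \<open>Z\<close> would lie in \<open>u\<^sub>1 = 0\<close> or in \<open>v\<^sub>1 = 0\<close>, and \<open>\<tau>\<^sub>1\<close> swaps the two.\<close>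
lemma GG_invariant_point_u1v1:
  assumes Z: "zirreducible Z" "\<forall>g\<in>GG. g ` Z = Z"
  obtains r where "valid r" "pt r \<in> Z" "cU1 r \<noteq> 0" "cV1 r \<noteq> 0"
proof (rule ccontr)
  assume none: "\<not> thesis"
  have "mhom_poly cU1" "mhom_poly cV1"
    by (rule mhom_polyI[where i=1 and j=0 and k=0], auto intro: poly_fun_intros)+
  then have closed: "zclosed (zero_locus {cU1})" "zclosed (zero_locus {cV1})"
    and pt_in: "\<And>r. pt r \<in> zero_locus {cU1} \<longleftrightarrow> valid r \<and> cU1 r = 0"
      "\<And>r. pt r \<in> zero_locus {cV1} \<longleftrightarrow> valid r \<and> cV1 r = 0"
    by (simp_all add: zclosed_zero_locus pt_in_zero_locus_iff)
  have ZPP: "Z \<subseteq> PP" using Z(1) zclosed_subset_PP by (auto simp: zirreducible_def)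
  have "Z = (Z \<inter> zero_locus {cU1}) \<union> (Z \<inter> zero_locus {cV1})"
  proof (intro equalityI subsetI)
    fix P assume "P \<in> Z"
    moreover from this obtain r where "valid r" "P = pt r" using ZPP by (blast elim: PP_cases)
    ultimately show "P \<in> (Z \<inter> zero_locus {cU1}) \<union> (Z \<inter> zero_locus {cV1})"
      using none that pt_in by blast
  qed blast
  moreover have "zclosed (Z \<inter> zero_locus {cU1})" "zclosed (Z \<inter> zero_locus {cV1})"
    using Z(1) closed by (simp_all add: zirreducible_def zclosed_Int)
  moreover have "\<And>A B. zclosed A \<Longrightarrow> zclosed B \<Longrightarrow> Z = A \<union> B \<Longrightarrow> Z = A \<or> Z = B"
    using Z(1) by (simp add: zirreducible_def)
  ultimately have "Z \<subseteq> zero_locus {cU1} \<or> Z \<subseteq> zero_locus {cV1}" by blast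
  moreover obtain P where "P \<in> Z" using Z(1) by (auto simp: zirreducible_def)
  then obtain r where r: "valid r" "pt r \<in> Z" using ZPP by (blast elim: PP_cases)
  moreover have "pt (tau1 r) \<in> Z" using Z(2) GG.gt1 r(2) lift_generators(1) by (metis imageI)
  ultimately show False
  proof (elim disjE)
    assume "Z \<subseteq> zero_locus {cU1}"
    then have "cU1 r = 0" "cU1 (tau1 r) = 0" using r(2) \<open>pt (tau1 r) \<in> Z\<close> pt_in(1) by blast+
    then show False using r(1) by (simp add: valid_iff_coords)
  next
    assume "Z \<subseteq> zero_locus {cV1}"
    then have "cV1 r = 0" "cV1 (tau1 r) = 0" using r(2) \<open>pt (tau1 r) \<in> Z\<close> pt_in(2) by blast+
    then show False using r(1) by (simp add: valid_iff_coords)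
  qed
qed

lemma gam_normalize:
  assumes "valid r" "cU1 r \<noteq> 0" "cV1 r \<noteq> 0"
  obtains l r0 where "l \<noteq> 0" "pt r0 = pt (gam l r)" "valid r0" "cU1 r0 = 1" "cV1 r0 = 1"
proof -
  define l where "l = csqrt (cU1 r / cV1 r)"
  have l2: "l * l = cU1 r / cV1 r" unfolding l_def by (metis power2_csqrt power2_eq_square)
  then have l: "l \<noteq> 0" using assms by auto
  define r0 where "r0 = scl (1 / (l * cV1 r)) 1 1 (gam l r)"
  have "cU1 r0 = 1" "cV1 r0 = 1" using l2 l assms by (simp_all add: r0_def field_simps)
  moreover have "pt r0 = pt (gam l r)" "valid r0" using l assms by (simp_all add: r0_def)
  ultimately show ?thesis using that l by blast
qed

definition gam_orbit :: "rep \<Rightarrow> rep set set" where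
  "gam_orbit r = {pt (gam l r) | l. l \<noteq> 0}"

lemma gam_orbit_subset:
  assumes "\<forall>g\<in>GG. g ` K = K" "pt r \<in> K" shows "gam_orbit r \<subseteq> K"
proof
  fix P assume "P \<in> gam_orbit r"
  then obtain l where "l \<noteq> 0" "P = lift (gam l) (pt r)"
    by (auto simp: gam_orbit_def lift_generators(4))
  moreover have "lift (gam l) ` K = K" using assms(1) GG.ggam[OF \<open>l \<noteq> 0\<close>] by blast
  ultimately show "P \<in> K" using assms(2) by blast
qed

lemma zirreducible_zclosure_gam_orbit:
  assumes "valid r" shows "zirreducible (zclosure (gam_orbit r))"
proof -
  define \<psi> where "\<psi> l = ((cU1 r, l * l * cV1 r), (cU2 r, l * l * cV2 r),
    (l * l * cX r, cY r, l * l * cZ r, cT r, l * cW r))" for l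
  have \<psi>: "\<psi> l = scl l l l (gam l r)" if "l \<noteq> 0" for l
    by (rule rep_eqI) (simp_all add: \<psi>_def that)
  have "gam_orbit r = (\<lambda>l. pt (\<psi> l)) ` (- {0})"
    by (auto simp: gam_orbit_def \<psi>)
  moreover have "polynomial_map \<psi>"
    by (auto simp: polynomial_map_def coords1_def coords2_def coords3_def \<psi>_def
        intro!: poly_function_intros)
  moreover have "infinite (- {0 :: complex})"
    using infinite_UNIV_char_0 by (simp add: Compl_eq_Diff_UNIV)
  ultimately show ?thesis
    using zirreducible_zclosure_image[of \<psi> "- {0}"] assms \<psi> by simp
qed

lemma GG_invariant_curve_eq_orbit_closure:
  assumes K: "irred_curve K" "\<forall>g\<in>GG. g ` K = K"
    and r: "valid r" "pt r \<in> K" "cU1 r \<noteq> 0" "cV1 r \<noteq> 0"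
  shows "K = zclosure (gam_orbit r)"
proof -
  let ?W = "zclosure (gam_orbit r)"
  have "zclosed K" using K(1) by (simp add: irred_curve_def zirreducible_def)
  then have "?W \<subseteq> K" using gam_orbit_subset[OF K(2) r(2)] by (rule zclosure_minimal)
  have "gam_orbit r \<subseteq> ?W"
    using r(1) by (intro zclosure_superset) (auto simp: gam_orbit_def)
  then have "pt (gam l r) \<in> ?W" if "l \<noteq> 0" for l using that by (auto simp: gam_orbit_def)
  then have "pt (gam 1 r) \<in> ?W" "pt (gam 2 r) \<in> ?W" by (simp_all del: gam_1)
  moreover have "pt (gam 2 r) \<noteq> pt (gam 1 r)" using gam_fixed_point[of 2 r] r(3,4) by auto
  ultimately have "\<nexists>P. ?W = {P}" by blast
  then have "\<not> ?W \<subset> K"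
    using irred_curve_psubset_singleton[OF K(1) zirreducible_zclosure_gam_orbit[OF r(1)]] by blast
  with \<open>?W \<subseteq> K\<close> show ?thesis by blast
qed

text \<open>Along the orbit \<open>[u\<^sub>1:v\<^sub>1]\<close> and \<open>[u\<^sub>2:v\<^sub>2]\<close> are rescaled by the same factor
  \<open>l\<^sup>2\<close> and \<open>[x:z]\<close> is constant.\<close>
lemma gam_orbit_invariants:
  assumes "valid r" "pt q \<in> zclosure (gam_orbit r)"
  shows "cU1 q * cV2 q * (cV1 r * cU2 r) = cV1 q * cU2 q * (cU1 r * cV2 r)"
    and "cX q * cZ r = cZ q * cX r"
proof -
  let ?F = "{\<lambda>q. cU1 q * cV2 q * (cV1 r * cU2 r) - cV1 q * cU2 q * (cU1 r * cV2 r),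
             \<lambda>q. cX q * cZ r - cZ q * cX r}"
  have "mhom_poly (\<lambda>q. cU1 q * cV2 q * (cV1 r * cU2 r) - cV1 q * cU2 q * (cU1 r * cV2 r))"
    by (rule mhom_polyI[where i=1 and j=1 and k=0])
      (auto intro!: poly_fun_intros simp: algebra_simps)
  moreover have "mhom_poly (\<lambda>q. cX q * cZ r - cZ q * cX r)"
    by (rule mhom_polyI[where i=0 and j=0 and k=1])
      (auto intro!: poly_fun_intros simp: algebra_simps)
  ultimately have F: "\<forall>f\<in>?F. mhom_poly f" by simp
  have "gam_orbit r \<subseteq> zero_locus ?F"
  proof
    fix P assume "P \<in> gam_orbit r"
    then obtain l where "l \<noteq> 0" "P = pt (gam l r)" by (auto simp: gam_orbit_def)
    then show "P \<in> zero_locus ?F"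
      using assms(1) by (simp only: pt_in_zero_locus_iff[OF F]) (simp add: field_simps)
  qed
  then have "zclosure (gam_orbit r) \<subseteq> zero_locus ?F"
    using F by (intro zclosure_minimal zclosed_zero_locus)
  then show "cU1 q * cV2 q * (cV1 r * cU2 r) = cV1 q * cU2 q * (cU1 r * cV2 r)"
    and "cX q * cZ r = cZ q * cX r"
    using assms(2) by (auto simp: pt_in_zero_locus_iff[OF F])
qed

lemma X_point_on_C_or_C':
  fixes u2 v2 x y z t w :: complex
  assumes X: "x = y" "u2 * z = v2 * t" "w ^ 2 + (x + z) * (y + t) = 0"
    and invariants: "u2 * u2 = v2 * v2" "y * z = t * x" "z * z = x * x"
    and nonzero: "u2 \<noteq> 0 \<or> v2 \<noteq> 0" "x \<noteq> 0 \<or> y \<noteq> 0 \<or> z \<noteq> 0 \<or> t \<noteq> 0 \<or> w \<noteq> 0"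
  shows "(w = 0 \<and> x + z = 0 \<and> y + t = 0 \<and> z = t \<and> u2 = v2) \<or> (x = z \<and> t = y)"
proof -
  have "(u2 - v2) * (u2 + v2) = 0" "(z - x) * (z + x) = 0"
    using invariants(1,3) by (simp_all add: algebra_simps)
  then have uv: "u2 = v2 \<or> u2 = - v2" and zx: "z = x \<or> z = - x"
    by (auto simp: eq_neg_iff_add_eq_0)
  show ?thesis
  proof (cases "u2 = v2")
    case True
    then have "z = t" using X(2) nonzero(1) by auto
    then show ?thesis using zx X True by (auto simp: power2_eq_square)
  next
    case False
    then have "v2 \<noteq> 0" "u2 = - v2" using uv by auto
    then have "v2 * (t + z) = 0" using X(2) by algebra
    then have "t = - z" using \<open>v2 \<noteq> 0\<close> by (simp add: eq_neg_iff_add_eq_0)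
    then have "x = 0" "z = 0" using invariants(2,3) X(1) zx by auto
    then show ?thesis using nonzero(2) X \<open>t = - z\<close> by auto
  qed
qed

lemma normalized_point_on_C_or_C':
  assumes r0: "pt r0 \<in> XX" "cU1 r0 = 1" "cV1 r0 = 1"
    and tau: "pt (tau1 r0) \<in> zclosure (gam_orbit r0)" "pt (tau2 r0) \<in> zclosure (gam_orbit r0)"
  shows "pt r0 \<in> CC \<or> pt r0 \<in> CC'"
proof -
  have X: "cX r0 = cY r0" "cU2 r0 * cZ r0 = cV2 r0 * cT r0"
      "cW r0 ^ 2 + (cX r0 + cZ r0) * (cY r0 + cT r0) = 0"
    and nonzero: "cU2 r0 \<noteq> 0 \<or> cV2 r0 \<noteq> 0"
      "cX r0 \<noteq> 0 \<or> cY r0 \<noteq> 0 \<or> cZ r0 \<noteq> 0 \<or> cT r0 \<noteq> 0 \<or> cW r0 \<noteq> 0"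
    and "valid r0"
    using r0 unfolding pt_in_XX_iff valid_iff_coords by auto
  have "cU2 r0 * cU2 r0 = cV2 r0 * cV2 r0" "cY r0 * cZ r0 = cT r0 * cX r0"
    using gam_orbit_invariants[OF \<open>valid r0\<close> tau(1)] r0(2,3) by simp_all
  moreover have "cZ r0 * cZ r0 = cX r0 * cX r0"
    using gam_orbit_invariants(2)[OF \<open>valid r0\<close> tau(2)] by simp
  ultimately have "(cW r0 = 0 \<and> cX r0 + cZ r0 = 0 \<and> cY r0 + cT r0 = 0 \<and> cZ r0 = cT r0 \<and>
      cU2 r0 = cV2 r0) \<or> (cX r0 = cZ r0 \<and> cT r0 = cY r0)"
    using X_point_on_C_or_C'[OF X] nonzero by blast
  then show ?thesis using r0 X(2) by (auto simp: pt_in_CC_iff pt_in_CC'_iff pt_in_XX_iff)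
qed

lemma GG_invariant_curve_cases:
  assumes Z: "Z \<subseteq> XX" "irred_curve Z" "\<forall>g\<in>GG. g ` Z = Z"
  shows "Z = CC \<or> Z = CC'"
proof -
  have "zirreducible Z" using Z(2) by (simp add: irred_curve_def)
  then obtain r where r: "valid r" "pt r \<in> Z" "cU1 r \<noteq> 0" "cV1 r \<noteq> 0"
    using GG_invariant_point_u1v1 Z(3) by blast
  obtain l r0 where l: "l \<noteq> 0" and r0: "pt r0 = pt (gam l r)" "valid r0" "cU1 r0 = 1" "cV1 r0 = 1"
    using gam_normalize[OF r(1,3,4)] .
  have "pt r0 \<in> Z" using gam_orbit_subset[OF Z(3) r(2)] l r0(1) by (auto simp: gam_orbit_def)
  have orbit_closure: "K = zclosure (gam_orbit r0)"
    if "irred_curve K" "\<forall>g\<in>GG. g ` K = K" "pt r0 \<in> K" for K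
    using GG_invariant_curve_eq_orbit_closure[OF that(1,2) r0(2) that(3)] r0(3,4) by simp
  have "pt (tau1 r0) \<in> Z" "pt (tau2 r0) \<in> Z"
    using Z(3) GG.gt1 GG.gt2 \<open>pt r0 \<in> Z\<close> lift_generators(1,2) by (metis imageI)+
  then have "pt r0 \<in> CC \<or> pt r0 \<in> CC'"
    using normalized_point_on_C_or_C' orbit_closure[OF Z(2,3) \<open>pt r0 \<in> Z\<close>] Z(1) \<open>pt r0 \<in> Z\<close> r0(3,4)
    by blast
  moreover have "\<forall>g\<in>GG. g ` CC = CC" "\<forall>g\<in>GG. g ` CC' = CC'" using GG_preserves_XX_CC_CC' by blast+
  ultimately show ?thesis
    using orbit_closure[OF Z(2,3) \<open>pt r0 \<in> Z\<close>] orbit_closure[OF irred_curve_CC]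
      orbit_closure[OF irred_curve_CC'] by metis
qed

theorem lemma4p16:
  shows "\<not> (\<exists>P\<in>XX. \<forall>g\<in>GG. g P = P)
    \<and> (\<forall>Z. (Z \<subseteq> XX \<and> irred_curve Z \<and> (\<forall>g\<in>GG. g ` Z = Z)) \<longleftrightarrow> (Z = CC \<or> Z = CC'))"
proof (rule conjI; (intro allI iffI)?)
  show "\<not> (\<exists>P\<in>XX. \<forall>g\<in>GG. g P = P)"
  proof
    assume "\<exists>P\<in>XX. \<forall>g\<in>GG. g P = P"
    then obtain P where "P \<in> XX" "\<forall>g\<in>GG. g P = P" by blast
    then show False using no_GG_fixed_point[of P] XX_subset_PP by blast
  qed
next
  fix Z assume "Z \<subseteq> XX \<and> irred_curve Z \<and> (\<forall>g\<in>GG. g ` Z = Z)"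
  then show "Z = CC \<or> Z = CC'" using GG_invariant_curve_cases by blast
next
  fix Z assume "Z = CC \<or> Z = CC'"
  then show "Z \<subseteq> XX \<and> irred_curve Z \<and> (\<forall>g\<in>GG. g ` Z = Z)"
    using CC_subset_XX CC'_subset_XX irred_curve_CC irred_curve_CC' GG_preserves_XX_CC_CC' by blast
qed

end
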